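(* Let $G$ be a Lie group, let $\mathcal{X}$ and $\mathcal{Y}$ be linear vector fields on $G$ with flows $(\varphi_t)_{t\in\mathbb{R}}$ and $(\psi_t)_{t\in\mathbb{R}}$, and suppose $\mathcal{X}$ and $\mathcal{Y}$ are $\pi$-conjugated, i.e. there is an automorphism $\pi:G\to G$ with $\pi(\varphi_t(x))=\psi_t(\pi(x))$ and $\varphi_t(\pi^{-1}(x))=\pi^{-1}(\psi_t(x))$ for all $t\in\mathbb{R}$, $x\in G$. Let $h:G\to G$ be a (continuous) homomorphism, $K=\ker(h)$ and $S=\ker(h\circ\pi^{-1})$. Then the pair $(\mathcal{X},\pi_K)$ is observable if and only if the pair $(\mathcal{Y},\pi_S)$ is observable.
   Context: A vector field on a Lie group $G$ is linear if its flow $(\varphi_t)_{t\in\mathbb{R}}$ is a one-parameter subgroup of $\mathrm{Aut}(G)$. For a closed subgroup $K$ of $G$, $\pi_K:G\to G/K$ denotes the canonical projection, and a pair $(\mathcal{X},\pi_K)$ consists of a linear vector field $\mathcal{X}$ (flow $\varphi_t$) and this projection. The pair is observable at $x_1\in G$ if for every $x_2\in G\setminus\{x_1\}$ there is $t\ge0$ with $\pi_K(\varphi_t(x_1))\neq\pi_K(\varphi_t(x_2))$; it is observable if it is observable at every $x_1\in G$. *)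

theory Defs
  imports "HOL-Analysis.Analysis" "HOL-Algebra.Algebra"
begin

text \<open>A (Hausdorff) topological group: a group G whose carrier is the topological
  space of T, with continuous multiplication and inversion.  (Stand-in for a Lie group,
  smooth structure is not available.)\<close>
definition topological_group :: "'a topology \<Rightarrow> ('a, 'b) monoid_scheme \<Rightarrow> bool" where
  "topological_group T G \<longleftrightarrow> group G \<and> topspace T = carrier G \<and> Hausdorff_space T
     \<and> continuous_map (prod_topology T T) T (\<lambda>(x, y). x \<otimes>\<^bsub>G\<^esub> y)
     \<and> continuous_map T T (\<lambda>x. inv\<^bsub>G\<^esub> x)"

text \<open>The flow of a linear vector field: a (continuous) one-parameter subgroup of Aut(G).\<close>
definition linear_flow :: "'a topology \<Rightarrow> ('a, 'b) monoid_scheme \<Rightarrow> (real \<Rightarrow> 'a \<Rightarrow> 'a) \<Rightarrow> bool" where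
  "linear_flow T G \<phi> \<longleftrightarrow>
     (\<forall>t. \<phi> t \<in> iso G G)
     \<and> (\<forall>x\<in>carrier G. \<phi> 0 x = x)
     \<and> (\<forall>s t. \<forall>x\<in>carrier G. \<phi> (s + t) x = \<phi> s (\<phi> t x))
     \<and> continuous_map (prod_topology euclideanreal T) T (\<lambda>(t, x). \<phi> t x)"

definition proj_quot :: "('a, 'b) monoid_scheme \<Rightarrow> 'a set \<Rightarrow> 'a \<Rightarrow> 'a set" where
  "proj_quot G K x = x <#\<^bsub>G\<^esub> K"

definition observable_at ::
  "('a, 'b) monoid_scheme \<Rightarrow> (real \<Rightarrow> 'a \<Rightarrow> 'a) \<Rightarrow> 'a set \<Rightarrow> 'a \<Rightarrow> bool" where
  "observable_at G \<phi> K x1 \<longleftrightarrow>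
     (\<forall>x2 \<in> carrier G - {x1}. \<exists>t\<ge>0.
        proj_quot G K (\<phi> t x1) \<noteq> proj_quot G K (\<phi> t x2))"

definition observable ::
  "('a, 'b) monoid_scheme \<Rightarrow> (real \<Rightarrow> 'a \<Rightarrow> 'a) \<Rightarrow> 'a set \<Rightarrow> bool" where
  "observable G \<phi> K \<longleftrightarrow> (\<forall>x1 \<in> carrier G. observable_at G \<phi> K x1)"

end

theory Submission
  imports Defs
begin

text \<open>Observability is a purely algebraic property of the flow and the subgroup, and it is
  transported by group isomorphisms: if \<pi> conjugates \<phi> to \<psi>, it maps cosets of K to cosets
  of \<pi> ` K, so \<pi> maps pairs of points indistinguishable for (\<phi>, K) exactly onto pairs
  indistinguishable for (\<psi>, \<pi> ` K).  Since ker (h \<circ> \<pi>\<inverse>) = \<pi> ` ker h, the theorem follows.\<close>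

lemma kernel_comp_inv_into:
  assumes "bij_betw \<pi> (carrier G) (carrier G')"
  shows "kernel G' H (\<lambda>x. h (inv_into (carrier G) \<pi> x)) = \<pi> ` kernel G H h"
proof -
  have "inv_into (carrier G) \<pi> (\<pi> x) = x" if "x \<in> carrier G" for x
    using assms that by (simp add: bij_betw_def)
  moreover have "carrier G' = \<pi> ` carrier G"
    using assms by (simp add: bij_betw_def)
  ultimately show ?thesis
    unfolding kernel_def by auto
qed

lemma proj_quot_iso_eq_iff:
  assumes "group G" and iso: "\<pi> \<in> iso G G'" and K: "K \<subseteq> carrier G"
    and x: "x \<in> carrier G" and y: "y \<in> carrier G"
  shows "proj_quot G' (\<pi> ` K) (\<pi> x) = proj_quot G' (\<pi> ` K) (\<pi> y)
     \<longleftrightarrow> proj_quot G K x = proj_quot G K y"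
proof -
  interpret group G by fact
  have hom: "\<pi> \<in> hom G G'" and inj: "inj_on \<pi> (carrier G)"
    using iso by (auto simp: iso_def bij_betw_def)
  have "proj_quot G' (\<pi> ` K) (\<pi> z) = \<pi> ` proj_quot G K z" if "z \<in> carrier G" for z
    unfolding proj_quot_def using coset_hom(1)[OF hom K that] by simp
  moreover have "proj_quot G K z \<subseteq> carrier G" if "z \<in> carrier G" for z
    unfolding proj_quot_def using l_coset_subset_G[OF K that] .
  ultimately show ?thesis
    using x y inj_on_image_eq_iff[OF inj] by simp
qed

lemma observable_at_iso:
  assumes group: "group G" and iso: "\<pi> \<in> iso G G'" and K: "K \<subseteq> carrier G"
    and closed: "\<And>t x. x \<in> carrier G \<Longrightarrow> \<phi> t x \<in> carrier G"
    and conj: "\<And>t x. x \<in> carrier G \<Longrightarrow> \<pi> (\<phi> t x) = \<psi> t (\<pi> x)"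
    and x: "x \<in> carrier G"
  shows "observable_at G' \<psi> (\<pi> ` K) (\<pi> x) \<longleftrightarrow> observable_at G \<phi> K x"
proof -
  have bij: "bij_betw \<pi> (carrier G) (carrier G')"
    using iso by (simp add: iso_def)
  have others: "carrier G' - {\<pi> x} = \<pi> ` (carrier G - {x})"
    using inj_on_image_set_diff[of \<pi> "carrier G" "carrier G" "{x}"] bij x
    by (simp add: bij_betw_def)
  have indist: "proj_quot G' (\<pi> ` K) (\<psi> t (\<pi> x)) = proj_quot G' (\<pi> ` K) (\<psi> t (\<pi> y))
      \<longleftrightarrow> proj_quot G K (\<phi> t x) = proj_quot G K (\<phi> t y)" if "y \<in> carrier G" for t y
    unfolding conj[OF x, symmetric] conj[OF that, symmetric]
    using proj_quot_iso_eq_iff[OF group iso K closed[OF x] closed[OF that]] .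
  show ?thesis
    unfolding observable_at_def others ball_simps(9)
    using indist by simp
qed

lemma observable_iso:
  assumes group: "group G" and iso: "\<pi> \<in> iso G G'" and K: "K \<subseteq> carrier G"
    and closed: "\<And>t x. x \<in> carrier G \<Longrightarrow> \<phi> t x \<in> carrier G"
    and conj: "\<And>t x. x \<in> carrier G \<Longrightarrow> \<pi> (\<phi> t x) = \<psi> t (\<pi> x)"
  shows "observable G' \<psi> (\<pi> ` K) \<longleftrightarrow> observable G \<phi> K"
proof -
  have carrier: "carrier G' = \<pi> ` carrier G"
    using iso by (simp add: iso_def bij_betw_def)
  have "observable G' \<psi> (\<pi> ` K) \<longleftrightarrow> (\<forall>x\<in>carrier G. observable_at G' \<psi> (\<pi> ` K) (\<pi> x))"
    unfolding observable_def carrier by blast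
  also have "\<dots> \<longleftrightarrow> observable G \<phi> K"
    unfolding observable_def
  proof (rule ball_cong[OF refl])
    fix x
    assume x: "x \<in> carrier G"
    show "observable_at G' \<psi> (\<pi> ` K) (\<pi> x) \<longleftrightarrow> observable_at G \<phi> K x"
      \<comment> \<open>discharging closed and conj via OF would leave \<phi> to higher-order unification\<close>
      by (rule observable_at_iso[OF group iso K]) (fact closed conj x)+
  qed
  finally show ?thesis .
qed

theorem proposition2p6:
  fixes T :: "'a topology" and G :: "('a, 'b) monoid_scheme"
    and \<phi> \<psi> :: "real \<Rightarrow> 'a \<Rightarrow> 'a" and \<pi> h :: "'a \<Rightarrow> 'a"
  assumes "topological_group T G"
    and "linear_flow T G \<phi>" and "linear_flow T G \<psi>"
    and "\<pi> \<in> iso G G" and "homeomorphic_map T T \<pi>"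
    and "\<And>t x. x \<in> carrier G \<Longrightarrow> \<pi> (\<phi> t x) = \<psi> t (\<pi> x)"
    and "\<And>t x. x \<in> carrier G \<Longrightarrow>
           \<phi> t (inv_into (carrier G) \<pi> x) = inv_into (carrier G) \<pi> (\<psi> t x)"
    and "h \<in> hom G G" and "continuous_map T T h"
  shows "observable G \<phi> (kernel G G h)
     \<longleftrightarrow> observable G \<psi> (kernel G G (\<lambda>x. h (inv_into (carrier G) \<pi> x)))"
proof -
  have group: "group G"
    using assms(1) by (simp add: topological_group_def)
  have closed: "\<phi> t x \<in> carrier G" if "x \<in> carrier G" for t x
  proof -
    have "\<phi> t \<in> hom G G"
      using assms(2) by (simp add: linear_flow_def iso_def)
    then show ?thesis
      using that by (rule hom_in_carrier)
  qed
  have bij: "bij_betw \<pi> (carrier G) (carrier G)"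
    using assms(4) by (simp add: iso_def)
  have kernel: "kernel G G h \<subseteq> carrier G"
    by (auto simp: kernel_def)
  have "observable G \<psi> (\<pi> ` kernel G G h) \<longleftrightarrow> observable G \<phi> (kernel G G h)"
    by (rule observable_iso[OF group assms(4) kernel]) (fact closed assms(6))+
  then show ?thesis
    unfolding kernel_comp_inv_into[OF bij, where H = G and h = h] by (rule sym)
qed

end
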